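(* In the two-period, two-sequence crossover design ($\mathcal{S}^{\mathrm{obs}}=\{AB,BA\}$, $N_{AB},N_{BA}\ge1$) under complete randomization, suppose Assumption 1 holds and Assumption 2 holds with $k=1$, so that $\tau_2:=\tau_2(A)=\tau_2(B)$. Then the only unbiased linear estimator of $\tau_1$ is $\widehat Y_1(AB)-\widehat Y_1(BA)$, and the only unbiased linear estimator of $\tau_2$ is $\widehat Y_2(BA)-\widehat Y_2(AB)$.
   Context: Setup: $N$ units, treatments $A,B$, $T$ periods; sequences $\vec z\in\{A,B\}^T$, $\vec z_{[t_1,t_2]}=z_{t_1}\cdots z_{t_2}$. Complete randomization with fixed positive group sizes $N_{\vec z}$, $\vec z\in\mathcal{S}^{\mathrm{obs}}$. Fixed potential outcomes $Y_{it}(\vec z)$ for all $\vec z\in\{A,B\}^T$; observed $Y_{it}=Y_{it}(\vec Z_i)$; randomness only from assignment. $\bar Y_t(\vec z)=N^{-1}\sum_iY_{it}(\vec z)$, $\widehat Y_t(\vec z)=N_{\vec z}^{-1}\sum_iY_{it}\mathbf1(\vec Z_i=\vec z)$. Assumption 1: $Y_{it}(\vec z)=Y_{it}(\vec z')$ whenever $\vec z_{[1,t]}=\vec z'_{[1,t]}$. Assumption 2 (order $k$): $Y_{it}(\vec z)=Y_{it}(\vec z')$ whenever $\vec z_{[\max(1,t-k+1),t]}=\vec z'_{[\max(1,t-k+1),t]}$. Estimands: $\tau_1=\bar Y_1(A)-\bar Y_1(B)$, $\tau_2(z_1)=\bar Y_2(z_1A)-\bar Y_2(z_1B)$. A linear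 estimator is $\sum_{t}\sum_{\vec z\in\mathcal{S}^{\mathrm{obs}}}\tilde w_t(\vec z)\widehat Y_t(\vec z)$ with non-random weights; unbiased means its expectation equals the estimand for every finite population satisfying the stated assumptions. *)

theory Defs
  imports Complex_Main "HOL-Library.FuncSet"
begin

text \<open>A sequence in {A,B}^T is a list of length T;
  periods are indexed 1..T, so z_[t1,t2] corresponds to drop (t1-1) (take t2 z). Potential outcomes: Y i t z (unit i, period t, sequence z).\<close>

datatype trt = A | B

definition asm1 :: "nat \<Rightarrow> nat \<Rightarrow> (nat \<Rightarrow> nat \<Rightarrow> trt list \<Rightarrow> real) \<Rightarrow> bool" where
  "asm1 N T Y \<longleftrightarrow> (\<forall>i<N. \<forall>t\<in>{1..T}. \<forall>z z'. length z = T \<longrightarrow> length z' = T \<longrightarrow>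
      take t z = take t z' \<longrightarrow> Y i t z = Y i t z')"

text \<open>Assumption 2 (carryover of order k): z_[max(1,t-k+1), t] in 1-based indexing
  is drop (t - k) (take t z) (natural-number subtraction).\<close>
definition asm2 :: "nat \<Rightarrow> nat \<Rightarrow> nat \<Rightarrow> (nat \<Rightarrow> nat \<Rightarrow> trt list \<Rightarrow> real) \<Rightarrow> bool" where
  "asm2 k N T Y \<longleftrightarrow> (\<forall>i<N. \<forall>t\<in>{1..T}. \<forall>z z'. length z = T \<longrightarrow> length z' = T \<longrightarrow>
      drop (t - k) (take t z) = drop (t - k) (take t z') \<longrightarrow> Y i t z = Y i t z')"

text \<open>Complete randomization: all assignments of the N units to observed sequences S
  with exactly Nz z units assigned to sequence z; each equally likely.\<close>
definition assignments :: "nat \<Rightarrow> trt list set \<Rightarrow> (trt list \<Rightarrow> nat) \<Rightarrow> (nat \<Rightarrow> trt list) set" where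
  "assignments N S Nz = {Z \<in> {..<N} \<rightarrow>\<^sub>E S. \<forall>z\<in>S. card {i. i < N \<and> Z i = z} = Nz z}"

definition expect :: "nat \<Rightarrow> trt list set \<Rightarrow> (trt list \<Rightarrow> nat) \<Rightarrow> ((nat \<Rightarrow> trt list) \<Rightarrow> real) \<Rightarrow> real" where
  "expect N S Nz f = (\<Sum>Z\<in>assignments N S Nz. f Z) / real (card (assignments N S Nz))"

definition Ybar :: "nat \<Rightarrow> (nat \<Rightarrow> nat \<Rightarrow> trt list \<Rightarrow> real) \<Rightarrow> nat \<Rightarrow> trt list \<Rightarrow> real" where
  "Ybar N Y t z = (\<Sum>i<N. Y i t z) / real N"

definition Yhat :: "nat \<Rightarrow> (trt list \<Rightarrow> nat) \<Rightarrow> (nat \<Rightarrow> nat \<Rightarrow> trt list \<Rightarrow> real)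
    \<Rightarrow> (nat \<Rightarrow> trt list) \<Rightarrow> nat \<Rightarrow> trt list \<Rightarrow> real" where
  "Yhat N Nz Y Z t z = (\<Sum>i\<in>{i. i < N \<and> Z i = z}. Y i t (Z i)) / real (Nz z)"

definition lin_est :: "nat \<Rightarrow> nat \<Rightarrow> trt list set \<Rightarrow> (trt list \<Rightarrow> nat) \<Rightarrow> (nat \<Rightarrow> trt list \<Rightarrow> real)
    \<Rightarrow> (nat \<Rightarrow> nat \<Rightarrow> trt list \<Rightarrow> real) \<Rightarrow> (nat \<Rightarrow> trt list) \<Rightarrow> real" where
  "lin_est N T S Nz w Y Z = (\<Sum>t\<in>{1..T}. \<Sum>z\<in>S. w t z * Yhat N Nz Y Z t z)"

definition unbiased :: "nat \<Rightarrow> nat \<Rightarrow> nat \<Rightarrow> trt list set \<Rightarrow> (trt list \<Rightarrow> nat)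
    \<Rightarrow> (nat \<Rightarrow> trt list \<Rightarrow> real) \<Rightarrow> ((nat \<Rightarrow> nat \<Rightarrow> trt list \<Rightarrow> real) \<Rightarrow> real) \<Rightarrow> bool" where
  "unbiased k N T S Nz w est \<longleftrightarrow>
     (\<forall>Y. asm1 N T Y \<and> asm2 k N T Y \<longrightarrow> expect N S Nz (lin_est N T S Nz w Y) = est Y)"

text \<open>tau_1 = Ybar_1(A) - Ybar_1(B) for T = 2; by Assumption 1 Ybar_1(z) depends only on z_1,
  so we evaluate at the full sequences AA and BB.\<close>
definition tau1 :: "nat \<Rightarrow> (nat \<Rightarrow> nat \<Rightarrow> trt list \<Rightarrow> real) \<Rightarrow> real" where
  "tau1 N Y = Ybar N Y 1 [A, A] - Ybar N Y 1 [B, B]"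

definition tau2 :: "nat \<Rightarrow> trt \<Rightarrow> (nat \<Rightarrow> nat \<Rightarrow> trt list \<Rightarrow> real) \<Rightarrow> real" where
  "tau2 N z1 Y = Ybar N Y 2 [z1, A] - Ybar N Y 2 [z1, B]"

end

theory Submission
  imports Defs "HOL-Combinatorics.Permutations"
begin

text \<open>Under complete randomization every unit is equally likely to receive each sequence, so
  each group mean is unbiased for the corresponding population mean, and the expectation of a
  linear estimator in the crossover design is
  w_1(AB) Ybar_1(AB) + w_1(BA) Ybar_1(BA) + w_2(AB) Ybar_2(AB) + w_2(BA) Ybar_2(BA).
  With carryover of order one, Ybar_t(z) depends only on z_t, so this is
  w_1(AB) Ybar_1(A) + w_1(BA) Ybar_1(B) + w_2(AB) Ybar_2(B) + w_2(BA) Ybar_2(A).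
  Populations whose outcomes depend only on the current treatment satisfy both assumptions and
  make the four means arbitrary, so unbiasedness forces the weights to be the coefficients of
  the estimand.\<close>

lemma finite_assignments: "finite S \<Longrightarrow> finite (assignments N S Nz)"
  unfolding assignments_def by (rule finite_subset[of _ "{..<N} \<rightarrow>\<^sub>E S"]) (auto intro: finite_PiE)

lemma assignments_comp_permutes:
  assumes Z: "Z \<in> assignments N S Nz" and p: "p permutes {..<N}"
  shows "Z \<circ> p \<in> assignments N S Nz"
proof -
  have "p i < N \<longleftrightarrow> i < N" for i
    using permutes_in_image[OF p] by simp
  then have "Z \<circ> p \<in> {..<N} \<rightarrow>\<^sub>E S"
    using Z p by (auto simp: assignments_def PiE_def Pi_def extensional_def permutes_not_in)
  moreover have "card {i. i < N \<and> (Z \<circ> p) i = z} = card {i. i < N \<and> Z i = z}" for z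
  proof -
    have "bij_betw p {i \<in> {..<N}. Z (p i) = z} {i \<in> {..<N}. Z i = z}"
      by (rule bij_betw_Collect[OF permutes_imp_bij[OF p]]) simp
    then show ?thesis
      by (simp add: bij_betw_same_card)
  qed
  ultimately show ?thesis using Z by (simp add: assignments_def)
qed

lemma card_assignments_unit_eq:
  assumes "i < N" "j < N"
  shows "card {Z \<in> assignments N S Nz. Z i = z} = card {Z \<in> assignments N S Nz. Z j = z}"
proof -
  have p: "transpose i j permutes {..<N}" using assms by (simp add: permutes_swap_id)
  have "bij_betw (\<lambda>Z. Z \<circ> transpose i j) {Z \<in> assignments N S Nz. Z j = z} {Z \<in> assignments N S Nz. Z i = z}"
    by (rule bij_betw_byWitness[where f' = "\<lambda>Z. Z \<circ> transpose i j"])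
      (auto simp: fun_eq_iff assignments_comp_permutes[OF _ p])
  then show ?thesis by (simp add: bij_betw_same_card)
qed

lemma assignments_nonempty:
  assumes S: "finite S" and N: "N = (\<Sum>z\<in>S. Nz z)"
  shows "assignments N S Nz \<noteq> {}"
proof -
  let ?U = "Sigma S (\<lambda>z. {..<Nz z})"
  obtain h where h: "bij_betw h {..<N} ?U"
    using ex_bij_betw_nat_finite[of ?U] S N by (auto simp: atLeast0LessThan)
  define Z where "Z i = (if i < N then fst (h i) else undefined)" for i
  have "fst (h i) \<in> S" if "i < N" for i
    using bij_betw_apply[OF h, of i] that by (cases "h i") auto
  then have "Z \<in> {..<N} \<rightarrow>\<^sub>E S"
    by (simp add: Z_def PiE_iff extensional_def)
  moreover have "card {i. i < N \<and> Z i = z} = Nz z" if "z \<in> S" for z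
  proof -
    have "bij_betw h {i \<in> {..<N}. Z i = z} {u \<in> ?U. fst u = z}"
      by (rule bij_betw_Collect[OF h]) (simp add: Z_def)
    moreover have "{u \<in> ?U. fst u = z} = {z} \<times> {..<Nz z}"
      using that by auto
    ultimately show ?thesis
      by (simp add: bij_betw_same_card Collect_conj_eq lessThan_def card_cartesian_product_singleton)
  qed
  ultimately show ?thesis by (auto simp: assignments_def)
qed

lemma sum_assignments_group_sum:
  fixes g :: "nat \<Rightarrow> real"
  assumes S: "finite S"
  shows "(\<Sum>Z\<in>assignments N S Nz. \<Sum>i | i < N \<and> Z i = z. g i)
       = real (card {Z \<in> assignments N S Nz. Z 0 = z}) * (\<Sum>i<N. g i)"
proof -
  let ?G = "assignments N S Nz"
  have fin: "finite ?G" using finite_assignments[OF S] .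
  have "(\<Sum>Z\<in>?G. \<Sum>i | i < N \<and> Z i = z. g i) = (\<Sum>Z\<in>?G. \<Sum>i<N. if Z i = z then g i else 0)"
  proof (rule sum.cong[OF refl])
    fix Z
    have "{i. i < N \<and> Z i = z} = {i \<in> {..<N}. Z i = z}" by auto
    then show "(\<Sum>i | i < N \<and> Z i = z. g i) = (\<Sum>i<N. if Z i = z then g i else 0)"
      by (simp only: sum.inter_filter[OF finite_lessThan])
  qed
  also have "\<dots> = (\<Sum>i<N. \<Sum>Z\<in>?G. if Z i = z then g i else 0)"
    by (rule sum.swap)
  also have "\<dots> = (\<Sum>i<N. g i * real (card {Z \<in> ?G. Z i = z}))"
  proof (rule sum.cong[OF refl])
    fix i
    show "(\<Sum>Z\<in>?G. if Z i = z then g i else 0) = g i * real (card {Z \<in> ?G. Z i = z})"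
      using sum.inter_filter[OF fin, of "\<lambda>_. g i" "\<lambda>Z. Z i = z"] by (simp add: mult.commute)
  qed
  also have "\<dots> = (\<Sum>i<N. g i * real (card {Z \<in> ?G. Z 0 = z}))"
  proof (rule sum.cong[OF refl])
    fix i assume "i \<in> {..<N}"
    then have "card {Z \<in> ?G. Z i = z} = card {Z \<in> ?G. Z 0 = z}"
      by (intro card_assignments_unit_eq) auto
    then show "g i * real (card {Z \<in> ?G. Z i = z}) = g i * real (card {Z \<in> ?G. Z 0 = z})"
      by simp
  qed
  finally show ?thesis by (simp add: sum_distrib_right mult.commute)
qed

lemma expect_Yhat:
  assumes S: "finite S" and z: "z \<in> S" and Nz: "0 < Nz z" and G: "assignments N S Nz \<noteq> {}"
  shows "expect N S Nz (\<lambda>Z. Yhat N Nz Y Z t z) = Ybar N Y t z"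
proof -
  let ?G = "assignments N S Nz"
  let ?c = "real (card {Z \<in> ?G. Z 0 = z})"
  have group_size: "card {i. i < N \<and> Z i = z} = Nz z" if "Z \<in> ?G" for Z
    using that z by (simp add: assignments_def)
  obtain Z0 where "Z0 \<in> ?G" using G by blast
  then have "{i. i < N \<and> Z0 i = z} \<noteq> {}"
    using Nz group_size[OF \<open>Z0 \<in> ?G\<close>] by (metis card.empty less_irrefl)
  then have "0 < N" by auto
  have "real (card ?G) * real (Nz z) = (\<Sum>Z\<in>?G. \<Sum>i | i < N \<and> Z i = z. 1)"
    by (simp add: group_size)
  also have "\<dots> = ?c * real N"
    by (subst sum_assignments_group_sum[OF S]) simp
  finally have c: "?c = real (card ?G) * real (Nz z) / real N"
    using \<open>0 < N\<close> by (simp add: field_simps)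
  have "(\<Sum>Z\<in>?G. Yhat N Nz Y Z t z) = (\<Sum>Z\<in>?G. \<Sum>i | i < N \<and> Z i = z. Y i t z) / real (Nz z)"
    by (simp add: Yhat_def sum_divide_distrib)
  also have "\<dots> = ?c * (\<Sum>i<N. Y i t z) / real (Nz z)"
    by (simp add: sum_assignments_group_sum[OF S])
  finally show ?thesis
    using G Nz finite_assignments[OF S] by (simp add: expect_def Ybar_def c)
qed

lemma expect_lin_est:
  assumes S: "finite S" and Nz: "\<forall>z\<in>S. 0 < Nz z" and G: "assignments N S Nz \<noteq> {}"
  shows "expect N S Nz (lin_est N T S Nz w Y) = (\<Sum>t\<in>{1..T}. \<Sum>z\<in>S. w t z * Ybar N Y t z)"
proof -
  have "expect N S Nz (lin_est N T S Nz w Y)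
      = (\<Sum>t\<in>{1..T}. \<Sum>z\<in>S. w t z * expect N S Nz (\<lambda>Z. Yhat N Nz Y Z t z))"
    unfolding expect_def lin_est_def
    by (simp add: sum.swap[of _ "assignments N S Nz"] sum_divide_distrib sum_distrib_left)
  also have "\<dots> = (\<Sum>t\<in>{1..T}. \<Sum>z\<in>S. w t z * Ybar N Y t z)"
    using Nz by (simp add: expect_Yhat[OF S _ _ G])
  finally show ?thesis .
qed

lemma take_last_period:
  assumes "1 \<le> t" "t \<le> length z"
  shows "take t z = take (t - 1) z @ [z ! (t - 1)]"
  using assms take_Suc_conv_app_nth[of "t - 1" z] by simp

lemma drop_take_last_period:
  assumes "1 \<le> t" "t \<le> length z"
  shows "drop (t - 1) (take t z) = [z ! (t - 1)]"
  using assms by (simp add: take_last_period)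

lemma asm2_1_Ybar_eq:
  assumes Y: "asm2 1 N T Y" and t: "t \<in> {1..T}" and len: "length z = T" "length z' = T"
    and current: "z ! (t - 1) = z' ! (t - 1)"
  shows "Ybar N Y t z = Ybar N Y t z'"
proof -
  have "drop (t - 1) (take t z) = drop (t - 1) (take t z')"
    using drop_take_last_period[of t z] drop_take_last_period[of t z'] t len current by auto
  then have "Y i t z = Y i t z'" if "i < N" for i
    using Y that t len unfolding asm2_def by blast
  then show ?thesis unfolding Ybar_def by simp
qed

text \<open>Outcomes without any carryover (\<open>z ! (t - 1)\<close> is the treatment in period \<open>t\<close>).\<close>

definition contemporaneous :: "(nat \<Rightarrow> trt \<Rightarrow> real) \<Rightarrow> nat \<Rightarrow> nat \<Rightarrow> trt list \<Rightarrow> real" where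
  "contemporaneous f i t z = f t (z ! (t - 1))"

lemma asm1_contemporaneous: "asm1 N T (contemporaneous f)"
  unfolding asm1_def contemporaneous_def
  by (metis atLeastAtMost_iff diff_less less_numeral_extra(1) nth_take order_less_le_trans)

lemma asm2_contemporaneous:
  assumes "1 \<le> k"
  shows "asm2 k N T (contemporaneous f)"
  unfolding asm2_def contemporaneous_def
proof (intro allI impI ballI)
  fix i t and z z' :: "trt list"
  assume t: "t \<in> {1..T}" and len: "length z = T" "length z' = T"
    and window: "drop (t - k) (take t z) = drop (t - k) (take t z')"
  have "last (drop (t - k) (take t u)) = u ! (t - 1)" if "length u = T" for u :: "trt list"
  proof -
    have "t - k < length (take t u)"
      using t that assms by auto
    then have "last (drop (t - k) (take t u)) = last (take t u)"
      by (rule last_drop)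
    with t that show ?thesis by (simp add: take_last_period)
  qed
  then show "f t (z ! (t - 1)) = f t (z' ! (t - 1))"
    using window len by metis
qed

lemma Ybar_contemporaneous: "0 < N \<Longrightarrow> Ybar N (contemporaneous f) t z = f t (z ! (t - 1))"
  unfolding Ybar_def contemporaneous_def by simp

lemma expect_lin_est_crossover:
  assumes "1 \<le> Nz [A, B]" "1 \<le> Nz [B, A]" "N = Nz [A, B] + Nz [B, A]"
  shows "expect N {[A, B], [B, A]} Nz (lin_est N 2 {[A, B], [B, A]} Nz w Y)
       = w 1 [A, B] * Ybar N Y 1 [A, B] + w 1 [B, A] * Ybar N Y 1 [B, A]
         + w 2 [A, B] * Ybar N Y 2 [A, B] + w 2 [B, A] * Ybar N Y 2 [B, A]"
proof -
  have "assignments N {[A, B], [B, A]} Nz \<noteq> {}"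
    using assms by (intro assignments_nonempty) auto
  moreover have "{1..2::nat} = {1, 2}" by auto
  ultimately show ?thesis
    using assms by (simp add: expect_lin_est)
qed

lemma expect_lin_est_crossover_asm2:
  assumes "1 \<le> Nz [A, B]" "1 \<le> Nz [B, A]" "N = Nz [A, B] + Nz [B, A]" and Y: "asm2 1 N 2 Y"
  shows "expect N {[A, B], [B, A]} Nz (lin_est N 2 {[A, B], [B, A]} Nz w Y)
       = w 1 [A, B] * Ybar N Y 1 [A, A] + w 1 [B, A] * Ybar N Y 1 [B, B]
         + w 2 [A, B] * Ybar N Y 2 [A, B] + w 2 [B, A] * Ybar N Y 2 [A, A]"
proof -
  have "Ybar N Y 1 [A, B] = Ybar N Y 1 [A, A]" "Ybar N Y 1 [B, A] = Ybar N Y 1 [B, B]"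
    "Ybar N Y 2 [B, A] = Ybar N Y 2 [A, A]"
    by (rule asm2_1_Ybar_eq[OF Y]; simp)+
  then show ?thesis by (simp add: expect_lin_est_crossover[OF assms(1-3)])
qed

lemma unbiased_crossover_contemporaneous:
  assumes "1 \<le> Nz [A, B]" "1 \<le> Nz [B, A]" "N = Nz [A, B] + Nz [B, A]"
    and unb: "unbiased 1 N 2 {[A, B], [B, A]} Nz w est"
  shows "w 1 [A, B] * f 1 A + w 1 [B, A] * f 1 B + w 2 [A, B] * f 2 B + w 2 [B, A] * f 2 A
       = est (contemporaneous f)"
proof -
  have "0 < N" using assms by simp
  have "expect N {[A, B], [B, A]} Nz (lin_est N 2 {[A, B], [B, A]} Nz w (contemporaneous f))
      = est (contemporaneous f)"
    using unb asm1_contemporaneous asm2_contemporaneous[of 1] unfolding unbiased_def by blast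
  then show ?thesis
    by (simp add: expect_lin_est_crossover[OF assms(1-3)] Ybar_contemporaneous[OF \<open>0 < N\<close>])
qed

theorem proposition5:
  fixes Nz :: "trt list \<Rightarrow> nat" and N :: nat and w :: "nat \<Rightarrow> trt list \<Rightarrow> real"
  assumes "Nz [A, B] \<ge> 1" and "Nz [B, A] \<ge> 1" and "N = Nz [A, B] + Nz [B, A]"
  shows "(unbiased 1 N 2 {[A, B], [B, A]} Nz w (tau1 N) \<longleftrightarrow>
            w 1 [A, B] = 1 \<and> w 1 [B, A] = -1 \<and> w 2 [A, B] = 0 \<and> w 2 [B, A] = 0)
       \<and> (unbiased 1 N 2 {[A, B], [B, A]} Nz w (tau2 N A) \<longleftrightarrow>
            w 1 [A, B] = 0 \<and> w 1 [B, A] = 0 \<and> w 2 [A, B] = -1 \<and> w 2 [B, A] = 1)"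
proof -
  have "0 < N" using assms by simp
  define e :: "nat \<Rightarrow> trt \<Rightarrow> nat \<Rightarrow> trt \<Rightarrow> real"
    where "e s y t x = (if t = s \<and> x = y then 1 else 0)" for s y t x
  note probe = unbiased_crossover_contemporaneous[OF assms]
  note simps = e_def tau1_def tau2_def Ybar_contemporaneous[OF \<open>0 < N\<close>]
  show ?thesis
  proof (rule conjI; rule iffI)
    assume "unbiased 1 N 2 {[A, B], [B, A]} Nz w (tau1 N)"
    from probe[OF this, of "e 1 A"] probe[OF this, of "e 1 B"]
      probe[OF this, of "e 2 A"] probe[OF this, of "e 2 B"]
    show "w 1 [A, B] = 1 \<and> w 1 [B, A] = -1 \<and> w 2 [A, B] = 0 \<and> w 2 [B, A] = 0"
      by (simp_all add: simps)
  next
    assume "unbiased 1 N 2 {[A, B], [B, A]} Nz w (tau2 N A)"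
    from probe[OF this, of "e 1 A"] probe[OF this, of "e 1 B"]
      probe[OF this, of "e 2 A"] probe[OF this, of "e 2 B"]
    show "w 1 [A, B] = 0 \<and> w 1 [B, A] = 0 \<and> w 2 [A, B] = -1 \<and> w 2 [B, A] = 1"
      by (simp_all add: simps)
  qed (simp_all add: unbiased_def tau1_def tau2_def expect_lin_est_crossover_asm2[OF assms])
qed

end
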